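(* Let $G$ and $H$ be countable discrete groups, let $(X,\mu)$ be a standard probability space and let $(\mathsf{A},\mathsf{B})$ be an ergodic p.m.p. action of $G\times H$ on $(X,\mu)$. Then the synergodic decomposition of $(\mathsf{A},\mathsf{B})$ is isomorphic, as a factor of $(\mathsf{A},\mathsf{B})$, to the local product \[(\mathsf{E}_{\mathsf{A}\curvearrowright\mathsf{B}}) \boxdot (\mathsf{E}_{\mathsf{B}\curvearrowright\mathsf{A}}) \] acting on $(E_{\mathsf{A}}\times E_{\mathsf{B}},\eta_{\mathsf{A}}\times\eta_{\mathsf{B}})$.
   Context: All groups are countable and discrete. For a standard probability space $(X,\mu)$, $\mathcal{M}_X$ is the $\sigma$-algebra of measurable sets, $\mathcal{N}_X=\{D\in\mathcal{M}_X:\mu(D)\in\{0,1\}\}$, and $\mathrm{Aut}(X,\mu)$ is the group of measure-preserving transformations (identified when equal a.e.). A p.m.p. action of $G$ is a homomorphism $\mathsf{A}:G\to\mathrm{Aut}(X,\mu)$, $g\mapsto \mathsf{A}^g$. A p.m.p. action of $G\times H$ is written as a pair $(\mathsf{A},\mathsf{B})$ of commuting actions of $G$ and of $H$ on $(X,\mu)$. A set $D$ is $\mathsf{A}$-invariant if $\mu(\mathsf{A}^gD\triangle D)=0$ for all $g$; $\mathcal{E}_{\mathsf{A}}$ denotes the $\sigma$-algebra of $\mathsf{A}$-invariant sets; $\mathsf{A}$ is ergodic if $\mathcal{E}_{\mathsf{A}}=\mathcal{N}_X$. A factor map from $\mathsf{A}$ (on $(X,\mu)$) onto $\mathsf{C}$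 (on $(Y,\nu)$) is a measurable surjection $\Phi$ with $\Phi_\#\mu=\nu$ and $\Phi\circ\mathsf{A}^g=\mathsf{C}^g\circ\Phi$; a sub-$\sigma$-algebra $\mathcal{S}$ is $\mathsf{A}$-stable if $\{\mathsf{A}^g D : D \in \mathcal{S}\}=\mathcal{S}$ for all $g$, and every stable $\sigma$-algebra $\mathcal{S}$ has a realization, i.e. a factor $\Phi$ with $\mathcal{S}=\{\Phi^{-1}(D)\}$, unique up to isomorphism of factors (two factors $\Phi:X\to Y$, $\Omega:X\to Z$ are isomorphic as factors if there is an isomorphism $\Psi:Y\to Z$ of the factor actions with $\Psi\circ\Phi=\Omega$). The ergodic decomposition of $\mathsf{A}$ is the realization of $\mathcal{E}_{\mathsf{A}}$; its underlying space $(E_{\mathsf{A}},\eta_{\mathsf{A}})$ is the space of ergodic components of $\mathsf{A}$. For commuting $(\mathsf{A},\mathsf{B})$, $\mathcal{E}_{\mathsf{A}}$ is $\mathsf{B}$-stable, and $\mathsf{E}_{\mathsf{B}\curvearrowright\mathsf{A}}$ denotes the resulting factor action of $H$ on $(E_{\mathsf{A}},\eta_{\mathsf{A}})$; symmetrically $\mathsf{E}_{\mathsf{A}\curvearrowright\mathsf{B}}$ is the factor action of $G$ on $(E_{\mathsf{B}},\eta_{\mathsf{B}})$. The synergodic decomposition of $(\mathsf{A},\mathsf{B})$ is the factor of $(\mathsf{A},\mathsf{B})$ realizing the $\sigma$-algebra $\sigma(\mathcal{E}_{\mathsf{A}},\mathcal{E}_{\mathsf{B}})$ generated by $\mathcal{E}_{\mathsf{A}}$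 and $\mathcal{E}_{\mathsf{B}}$. For $\mathsf{C}$ a p.m.p. action of $G$ on $(Y,\nu)$ and $\mathsf{D}$ a p.m.p. action of $H$ on $(Z,\omega)$, the local product $\mathsf{C}\boxdot\mathsf{D}$ is the action of $G\times H$ on $(Y\times Z,\nu\times\omega)$ given by $(g,h)\cdot(y,z)=(\mathsf{C}^gy,\mathsf{D}^hz)$. *)

theory Defs
  imports "HOL-Probability.Probability"
begin

definition standard_prob_space :: "('a::polish_space) measure \<Rightarrow> bool" where
  "standard_prob_space M \<longleftrightarrow> prob_space M \<and> space M = UNIV \<and> sets M = sets borel"

definition mp_map :: "'a measure \<Rightarrow> 'b measure \<Rightarrow> ('a \<Rightarrow> 'b) \<Rightarrow> bool" where
  "mp_map M N f \<longleftrightarrow> f \<in> measurable M N \<and> distr M N f = N"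

text \<open>A p.m.p. action of a (countable discrete) group: each group element acts by a
  measure-preserving transformation, and the action law holds almost everywhere
  (elements of Aut(X,mu) are identified when equal a.e.).  Invertibility follows
  from the action law.\<close>
definition pmp_action :: "'x measure \<Rightarrow> ('g::group_add \<Rightarrow> 'x \<Rightarrow> 'x) \<Rightarrow> bool" where
  "pmp_action M A \<longleftrightarrow>
     (\<forall>g. mp_map M M (A g)) \<and>
     (AE x in M. A 0 x = x) \<and>
     (\<forall>g h. AE x in M. A (g + h) x = A g (A h x))"

text \<open>Commuting pair of actions = p.m.p. action of G x H.\<close>
definition commuting :: "'x measure \<Rightarrow> ('g \<Rightarrow> 'x \<Rightarrow> 'x) \<Rightarrow> ('h \<Rightarrow> 'x \<Rightarrow> 'x) \<Rightarrow> bool" where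
  "commuting M A B \<longleftrightarrow> (\<forall>g h. AE x in M. A g (B h x) = B h (A g x))"

definition pmp_pair_action :: "'x measure \<Rightarrow> ('g::group_add \<Rightarrow> 'x \<Rightarrow> 'x) \<Rightarrow> ('h::group_add \<Rightarrow> 'x \<Rightarrow> 'x) \<Rightarrow> bool" where
  "pmp_pair_action M A B \<longleftrightarrow> pmp_action M A \<and> pmp_action M B \<and> commuting M A B"

definition pair_act :: "('g \<Rightarrow> 'x \<Rightarrow> 'x) \<Rightarrow> ('h \<Rightarrow> 'x \<Rightarrow> 'x) \<Rightarrow> ('g \<times> 'h) \<Rightarrow> 'x \<Rightarrow> 'x" where
  "pair_act A B = (\<lambda>(g, h) x. A g (B h x))"

definition sdiff :: "'x set \<Rightarrow> 'x set \<Rightarrow> 'x set" where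
  "sdiff D E = (D - E) \<union> (E - D)"

definition invariant_set :: "'x measure \<Rightarrow> ('i \<Rightarrow> 'x \<Rightarrow> 'x) \<Rightarrow> 'x set \<Rightarrow> bool" where
  "invariant_set M A D \<longleftrightarrow> D \<in> sets M \<and>
     (\<forall>g. measure M (sdiff ((A g -` D) \<inter> space M) D) = 0)"

definition inv_sets :: "'x measure \<Rightarrow> ('i \<Rightarrow> 'x \<Rightarrow> 'x) \<Rightarrow> 'x set set" where
  "inv_sets M A = {D. invariant_set M A D}"

definition ergodic :: "'x measure \<Rightarrow> ('i \<Rightarrow> 'x \<Rightarrow> 'x) \<Rightarrow> bool" where
  "ergodic M A \<longleftrightarrow> (\<forall>D \<in> inv_sets M A. measure M D = 0 \<or> measure M D = 1)"

definition factor_map :: "'x measure \<Rightarrow> ('i \<Rightarrow> 'x \<Rightarrow> 'x) \<Rightarrow> 'y measure \<Rightarrow> ('i \<Rightarrow> 'y \<Rightarrow> 'y) \<Rightarrow> ('x \<Rightarrow> 'y) \<Rightarrow> bool" where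
  "factor_map M A N C \<Phi> \<longleftrightarrow> mp_map M N \<Phi> \<and> (\<forall>g. AE x in M. \<Phi> (A g x) = C g (\<Phi> x))"

definition eq_mod_null :: "'x measure \<Rightarrow> 'x set set \<Rightarrow> 'x set set \<Rightarrow> bool" where
  "eq_mod_null M S T \<longleftrightarrow>
     (\<forall>D\<in>S. \<exists>D'\<in>T. measure M (sdiff D D') = 0) \<and> (\<forall>D\<in>T. \<exists>D'\<in>S. measure M (sdiff D D') = 0)"

definition pullback_sets :: "'x measure \<Rightarrow> 'y measure \<Rightarrow> ('x \<Rightarrow> 'y) \<Rightarrow> 'x set set" where
  "pullback_sets M N \<Phi> = {\<Phi> -` D \<inter> space M | D. D \<in> sets N}"

definition realizes :: "'x measure \<Rightarrow> 'y measure \<Rightarrow> ('x \<Rightarrow> 'y) \<Rightarrow> 'x set set \<Rightarrow> bool" where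
  "realizes M N \<Phi> S \<longleftrightarrow> eq_mod_null M (pullback_sets M N \<Phi>) S"

definition action_iso :: "'x measure \<Rightarrow> ('i \<Rightarrow> 'x \<Rightarrow> 'x) \<Rightarrow> 'y measure \<Rightarrow> ('i \<Rightarrow> 'y \<Rightarrow> 'y) \<Rightarrow> ('x \<Rightarrow> 'y) \<Rightarrow> bool" where
  "action_iso M A N C \<Psi> \<longleftrightarrow> factor_map M A N C \<Psi> \<and>
     (\<exists>\<Psi>'. mp_map N M \<Psi>' \<and> (AE x in M. \<Psi>' (\<Psi> x) = x) \<and> (AE y in N. \<Psi> (\<Psi>' y) = y))"

definition local_prod_G :: "('g \<Rightarrow> 'y \<Rightarrow> 'y) \<Rightarrow> 'g \<Rightarrow> ('y \<times> 'z) \<Rightarrow> ('y \<times> 'z)" where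
  "local_prod_G C = (\<lambda>g (y, z). (C g y, z))"

definition local_prod_H :: "('h \<Rightarrow> 'z \<Rightarrow> 'z) \<Rightarrow> 'h \<Rightarrow> ('y \<times> 'z) \<Rightarrow> ('y \<times> 'z)" where
  "local_prod_H D = (\<lambda>h (y, z). (y, D h z))"

end

theory Submission
  imports Defs
begin

text \<open>Ergodicity of the \<open>G \<times> H\<close>-action makes every \<open>B\<close>-invariant set independent of every
  \<open>A\<close>-invariant set: the conditional expectation of its indicator onto the \<open>A\<close>-invariant sets
  is still \<open>B\<close>-invariant, because \<open>B\<close> permutes the \<open>A\<close>-invariant sets, so it is
  \<open>G \<times> H\<close>-invariant and hence constant. Consequently \<open>x \<mapsto> (\<pi>B x, \<pi>A x)\<close> pushes \<open>\<mu>\<close> forward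
  to \<open>\<eta>B \<otimes> \<eta>A\<close>; as \<open>\<pi>A\<close> is \<open>A\<close>-invariant and \<open>B\<close>-equivariant (and symmetrically for \<open>\<pi>B\<close>),
  it intertwines \<open>(A, B)\<close> with the local product; and it generates the \<sigma>-algebra spanned by
  the \<open>A\<close>- and the \<open>B\<close>-invariant sets modulo null sets. So it is a second realization of the
  synergodic \<sigma>-algebra, and two realizations on standard Borel spaces are isomorphic, since by
  an a.e. Doob--Dynkin factorization each factor map is a measurable function of the other.\<close>

lemma null_sdiff_iff_AE:
  assumes "finite_measure M" "S \<in> sets M" "T \<in> sets M"
  shows "measure M (sdiff S T) = 0 \<longleftrightarrow> (AE x in M. (x \<in> S) = (x \<in> T))"
proof -
  have sdiff: "sdiff S T \<in> sets M" using assms unfolding sdiff_def by auto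
  have "(AE x in M. (x \<in> S) = (x \<in> T)) \<longleftrightarrow> emeasure M (sdiff S T) = 0"
    by (rule AE_iff_measurable[OF sdiff])
       (use assms sets.sets_into_space in \<open>auto simp: sdiff_def\<close>)
  then show ?thesis
    using finite_measure.emeasure_eq_measure[OF assms(1)] by simp
qed

lemma mp_map_AE: "mp_map M N T \<Longrightarrow> AE y in N. P y \<Longrightarrow> AE x in M. P (T x)"
  unfolding mp_map_def by (metis AE_distrD)

lemma AE_of_mp_map:
  assumes "mp_map M N f" "AE x in M. P (f x)" "{y \<in> space N. P y} \<in> sets N"
  shows "AE y in N. P y"
  using assms AE_distr_iff[of f M N P] unfolding mp_map_def by metis

lemma mp_map_of_AE_comp:
  assumes \<Phi>: "mp_map M N \<Phi>" and \<pi>: "mp_map M P \<pi>"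
    and \<Psi>: "\<Psi> \<in> measurable N P" and comp: "AE x in M. \<Psi> (\<Phi> x) = \<pi> x"
  shows "mp_map N P \<Psi>"
proof -
  have \<Phi>m: "\<Phi> \<in> measurable M N" and \<pi>m: "\<pi> \<in> measurable M P"
    using \<Phi> \<pi> unfolding mp_map_def by auto
  have "distr N P \<Psi> = distr (distr M N \<Phi>) P \<Psi>" using \<Phi> unfolding mp_map_def by simp
  also have "\<dots> = distr M P (\<Psi> \<circ> \<Phi>)" by (rule distr_distr[OF \<Psi> \<Phi>m])
  also have "\<dots> = distr M P \<pi>"
    by (rule distr_cong_AE) (use comp measurable_comp[OF \<Phi>m \<Psi>] \<pi>m in auto)
  finally show ?thesis using \<Psi> \<pi> unfolding mp_map_def by simp
qed

lemma realizes_iff_AE: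
  assumes M: "finite_measure M" and \<Phi>: "\<Phi> \<in> measurable M N" and S: "S \<subseteq> sets M"
  shows "realizes M N \<Phi> S \<longleftrightarrow>
    (\<forall>V\<in>sets N. \<exists>D\<in>S. AE x in M. (\<Phi> x \<in> V) = (x \<in> D)) \<and>
    (\<forall>D\<in>S. \<exists>V\<in>sets N. AE x in M. (\<Phi> x \<in> V) = (x \<in> D))"
proof -
  have null_iff: "measure M (sdiff (\<Phi> -` V \<inter> space M) D) = 0 \<longleftrightarrow> (AE x in M. (\<Phi> x \<in> V) = (x \<in> D))"
    if "V \<in> sets N" "D \<in> S" for V D
  proof -
    have "\<Phi> -` V \<inter> space M \<in> sets M" using measurable_sets[OF \<Phi> that(1)] .
    then have "measure M (sdiff (\<Phi> -` V \<inter> space M) D) = 0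
        \<longleftrightarrow> (AE x in M. (x \<in> \<Phi> -` V \<inter> space M) = (x \<in> D))"
      using null_sdiff_iff_AE M S that(2) by blast
    also have "\<dots> \<longleftrightarrow> (AE x in M. (\<Phi> x \<in> V) = (x \<in> D))"
      by (rule AE_cong) auto
    finally show ?thesis .
  qed
  have sdiff_commute: "sdiff D D' = sdiff D' D" for D D' :: "'a set"
    by (auto simp: sdiff_def)
  have "(\<forall>P\<in>pullback_sets M N \<Phi>. \<exists>D\<in>S. measure M (sdiff P D) = 0)
      \<longleftrightarrow> (\<forall>V\<in>sets N. \<exists>D\<in>S. measure M (sdiff (\<Phi> -` V \<inter> space M) D) = 0)"
    unfolding pullback_sets_def by blast
  also have "\<dots> \<longleftrightarrow> (\<forall>V\<in>sets N. \<exists>D\<in>S. AE x in M. (\<Phi> x \<in> V) = (x \<in> D))"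
    using null_iff by (intro ball_cong bex_cong refl) blast
  finally have fwd: "\<dots> \<longleftrightarrow> (\<forall>P\<in>pullback_sets M N \<Phi>. \<exists>D\<in>S. measure M (sdiff P D) = 0)" ..
  have "(\<forall>D\<in>S. \<exists>P\<in>pullback_sets M N \<Phi>. measure M (sdiff D P) = 0)
      \<longleftrightarrow> (\<forall>D\<in>S. \<exists>V\<in>sets N. measure M (sdiff D (\<Phi> -` V \<inter> space M)) = 0)"
    unfolding pullback_sets_def by blast
  also have "\<dots> \<longleftrightarrow> (\<forall>D\<in>S. \<exists>V\<in>sets N. AE x in M. (\<Phi> x \<in> V) = (x \<in> D))"
    using null_iff sdiff_commute by (intro ball_cong bex_cong refl) metis
  finally show ?thesis using fwd unfolding realizes_def eq_mod_null_def by blast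
qed

lemma AE_preimage_sigma_sets:
  assumes S: "sigma_algebra (space M) S" and f: "f \<in> space M \<rightarrow> \<Omega>"
    and W: "W \<in> sigma_sets \<Omega> G"
    and gen: "\<And>E. E \<in> G \<Longrightarrow> \<exists>D\<in>S. AE x in M. (f x \<in> E) = (x \<in> D)"
  shows "\<exists>D\<in>S. AE x in M. (f x \<in> W) = (x \<in> D)"
  using W
proof induct
  case (Basic E)
  then show ?case by (rule gen)
next
  case Empty
  show ?case by (intro bexI[of _ "{}"]) (use S in \<open>auto simp: sigma_algebra_iff2\<close>)
next
  case (Compl E)
  then obtain D where D: "D \<in> S" "AE x in M. (f x \<in> E) = (x \<in> D)" by blast
  have "AE x in M. (f x \<in> \<Omega> - E) = (x \<in> space M - D)"
    using D(2) AE_space by eventually_elim (use f in auto)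
  then show ?case using algebra.compl_sets[OF sigma_algebra.axioms(1)[OF S] D(1)] by blast
next
  case (Union E)
  then obtain D where D: "\<And>i. D i \<in> S" "\<And>i. AE x in M. (f x \<in> E i) = (x \<in> D i)"
    by metis
  have "AE x in M. \<forall>i. (f x \<in> E i) = (x \<in> D i)" using D(2) by (simp add: AE_all_countable)
  then have "AE x in M. (f x \<in> (\<Union>i. E i)) = (x \<in> (\<Union>i. D i))" by eventually_elim auto
  then show ?case using sigma_algebra.countable_UN[OF S, of D UNIV] D(1) by blast
qed

lemma AE_vimage_pair_in_sigma_sets:
  assumes gen: "SA \<union> SB \<subseteq> Pow (space M)"
    and \<pi>B: "\<pi>B \<in> space M \<rightarrow> space EB" "\<And>V. V \<in> sets EB \<Longrightarrow> \<exists>D\<in>SB. AE x in M. (\<pi>B x \<in> V) = (x \<in> D)"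
    and \<pi>A: "\<pi>A \<in> space M \<rightarrow> space EA" "\<And>V. V \<in> sets EA \<Longrightarrow> \<exists>D\<in>SA. AE x in M. (\<pi>A x \<in> V) = (x \<in> D)"
    and W: "W \<in> sets (EB \<Otimes>\<^sub>M EA)"
  shows "\<exists>D\<in>sigma_sets (space M) (SA \<union> SB). AE x in M. ((\<pi>B x, \<pi>A x) \<in> W) = (x \<in> D)"
proof -
  interpret S: sigma_algebra "space M" "sigma_sets (space M) (SA \<union> SB)"
    by (rule sigma_algebra_sigma_sets[OF gen])
  show ?thesis
  proof (rule AE_preimage_sigma_sets[OF S.sigma_algebra_axioms])
    show "(\<lambda>x. (\<pi>B x, \<pi>A x)) \<in> space M \<rightarrow> space EB \<times> space EA" using \<pi>A(1) \<pi>B(1) by auto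
    show "W \<in> sigma_sets (space EB \<times> space EA) {a \<times> b |a b. a \<in> sets EB \<and> b \<in> sets EA}"
      using W unfolding sets_pair_measure .
  next
    fix E assume "E \<in> {a \<times> b |a b. a \<in> sets EB \<and> b \<in> sets EA}"
    then obtain a b where ab: "E = a \<times> b" "a \<in> sets EB" "b \<in> sets EA" by blast
    obtain S where S: "S \<in> SB" "AE x in M. (\<pi>B x \<in> a) = (x \<in> S)" using \<pi>B(2)[OF ab(2)] by blast
    obtain T where T: "T \<in> SA" "AE x in M. (\<pi>A x \<in> b) = (x \<in> T)" using \<pi>A(2)[OF ab(3)] by blast
    have "S \<inter> T \<in> sigma_sets (space M) (SA \<union> SB)"
      using S(1) T(1) by (intro S.Int sigma_sets.Basic) auto
    moreover have "AE x in M. ((\<pi>B x, \<pi>A x) \<in> E) = (x \<in> S \<inter> T)"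
      using S(2) T(2) by eventually_elim (auto simp: ab)
    ultimately show "\<exists>D\<in>sigma_sets (space M) (SA \<union> SB). AE x in M. ((\<pi>B x, \<pi>A x) \<in> E) = (x \<in> D)"
      by blast
  qed
qed

lemma AE_sigma_sets_in_vimage_pair:
  assumes \<pi>B: "\<pi>B \<in> measurable M EB" "\<And>D. D \<in> SB \<Longrightarrow> \<exists>V\<in>sets EB. AE x in M. (\<pi>B x \<in> V) = (x \<in> D)"
    and \<pi>A: "\<pi>A \<in> measurable M EA" "\<And>D. D \<in> SA \<Longrightarrow> \<exists>V\<in>sets EA. AE x in M. (\<pi>A x \<in> V) = (x \<in> D)"
    and D: "D \<in> sigma_sets (space M) (SA \<union> SB)"
  shows "\<exists>W\<in>sets (EB \<Otimes>\<^sub>M EA). AE x in M. ((\<pi>B x, \<pi>A x) \<in> W) = (x \<in> D)"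
proof -
  let ?\<pi> = "\<lambda>x. (\<pi>B x, \<pi>A x)" and ?P = "EB \<Otimes>\<^sub>M EA"
  let ?V = "sets (vimage_algebra (space M) ?\<pi> ?P)"
  have \<pi>: "?\<pi> \<in> measurable M ?P" using \<pi>B(1) \<pi>A(1) by (rule measurable_Pair)
  have V: "sigma_algebra (space M) ?V"
    using sets.sigma_algebra_axioms[of "vimage_algebra (space M) ?\<pi> ?P"] by simp
  have "\<exists>D'\<in>?V. AE x in M. (x \<in> D) = (x \<in> D')"
  proof (rule AE_preimage_sigma_sets[where f="\<lambda>x. x", OF V _ D])
    fix E assume "E \<in> SA \<union> SB"
    then show "\<exists>D'\<in>?V. AE x in M. (x \<in> E) = (x \<in> D')"
    proof
      assume "E \<in> SA"
      then obtain b where b: "b \<in> sets EA" "AE x in M. (\<pi>A x \<in> b) = (x \<in> E)" using \<pi>A(2) by blast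
      have "?\<pi> -` (space EB \<times> b) \<inter> space M \<in> ?V" using b(1) by (intro in_vimage_algebra) auto
      moreover have "AE x in M. (x \<in> E) = (x \<in> ?\<pi> -` (space EB \<times> b) \<inter> space M)"
        using b(2) AE_space by eventually_elim (use measurable_space[OF \<pi>B(1)] in auto)
      ultimately show ?thesis by blast
    next
      assume "E \<in> SB"
      then obtain a where a: "a \<in> sets EB" "AE x in M. (\<pi>B x \<in> a) = (x \<in> E)" using \<pi>B(2) by blast
      have "?\<pi> -` (a \<times> space EA) \<inter> space M \<in> ?V" using a(1) by (intro in_vimage_algebra) auto
      moreover have "AE x in M. (x \<in> E) = (x \<in> ?\<pi> -` (a \<times> space EA) \<inter> space M)"
        using a(2) AE_space by eventually_elim (use measurable_space[OF \<pi>A(1)] in auto)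
      ultimately show ?thesis by blast
    qed
  qed auto
  then obtain W where "W \<in> sets ?P" "AE x in M. (x \<in> D) = (?\<pi> x \<in> W)"
    using sets_vimage_algebra2[of ?\<pi> "space M" ?P] measurable_space[OF \<pi>] by (auto elim!: AE_mp)
  then show ?thesis by (auto elim!: AE_mp)
qed

lemma realizes_pair:
  assumes M: "finite_measure M"
    and \<pi>B: "\<pi>B \<in> measurable M EB" "SB \<subseteq> sets M" "realizes M EB \<pi>B SB"
    and \<pi>A: "\<pi>A \<in> measurable M EA" "SA \<subseteq> sets M" "realizes M EA \<pi>A SA"
  shows "realizes M (EB \<Otimes>\<^sub>M EA) (\<lambda>x. (\<pi>B x, \<pi>A x)) (sigma_sets (space M) (SA \<union> SB))"
proof -
  have RB: "\<forall>V\<in>sets EB. \<exists>D\<in>SB. AE x in M. (\<pi>B x \<in> V) = (x \<in> D)"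
    "\<forall>D\<in>SB. \<exists>V\<in>sets EB. AE x in M. (\<pi>B x \<in> V) = (x \<in> D)"
    using realizes_iff_AE[OF M \<pi>B(1,2)] \<pi>B(3) by auto
  have RA: "\<forall>V\<in>sets EA. \<exists>D\<in>SA. AE x in M. (\<pi>A x \<in> V) = (x \<in> D)"
    "\<forall>D\<in>SA. \<exists>V\<in>sets EA. AE x in M. (\<pi>A x \<in> V) = (x \<in> D)"
    using realizes_iff_AE[OF M \<pi>A(1,2)] \<pi>A(3) by auto
  have gen: "SA \<union> SB \<subseteq> Pow (space M)" using \<pi>A(2) \<pi>B(2) sets.sets_into_space by blast
  have S: "sigma_sets (space M) (SA \<union> SB) \<subseteq> sets M"
    using \<pi>A(2) \<pi>B(2) by (intro sets.sigma_sets_subset) auto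
  have \<pi>: "(\<lambda>x. (\<pi>B x, \<pi>A x)) \<in> measurable M (EB \<Otimes>\<^sub>M EA)"
    using \<pi>B(1) \<pi>A(1) by (rule measurable_Pair)
  have "\<exists>D\<in>sigma_sets (space M) (SA \<union> SB). AE x in M. ((\<pi>B x, \<pi>A x) \<in> W) = (x \<in> D)"
    if "W \<in> sets (EB \<Otimes>\<^sub>M EA)" for W
    by (rule AE_vimage_pair_in_sigma_sets[OF gen _ _ _ _ that])
       (use RA(1) RB(1) measurable_space[OF \<pi>A(1)] measurable_space[OF \<pi>B(1)] in auto)
  moreover have "\<exists>W\<in>sets (EB \<Otimes>\<^sub>M EA). AE x in M. ((\<pi>B x, \<pi>A x) \<in> W) = (x \<in> D)"
    if "D \<in> sigma_sets (space M) (SA \<union> SB)" for D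
    by (rule AE_sigma_sets_in_vimage_pair[OF \<pi>B(1) _ \<pi>A(1) _ that]) (use RA(2) RB(2) in auto)
  ultimately show ?thesis using realizes_iff_AE[OF M \<pi> S] by blast
qed

section \<open>Factoring through a map modulo null sets\<close>

lemma ex_borel_approximation_AE:
  fixes f :: "'a \<Rightarrow> 'z::{metric_space, second_countable_topology}"
  assumes \<Phi>: "\<Phi> \<in> measurable M N" and e: "e > 0"
    and determined: "\<And>U. open U \<Longrightarrow> \<exists>V\<in>sets N. AE x in M. (f x \<in> U) = (\<Phi> x \<in> V)"
  shows "\<exists>g\<in>borel_measurable N. AE x in M. dist (g (\<Phi> x)) (f x) < e"
proof -
  obtain Z :: "'z set" where "countable Z"
    and dense: "\<And>U. open U \<Longrightarrow> U \<noteq> {} \<Longrightarrow> \<exists>z\<in>Z. z \<in> U"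
    using countable_dense_setE by blast
  moreover have "Z \<noteq> {}" using dense[of UNIV] by auto
  ultimately have z: "range (from_nat_into Z) = Z" by simp
  define z where "z = from_nat_into Z"
  have "\<forall>k. \<exists>V. V \<in> sets N \<and> (AE x in M. (f x \<in> ball (z k) e) = (\<Phi> x \<in> V))"
    using determined open_ball by blast
  then obtain V where V: "\<And>k. V k \<in> sets N" "\<And>k. AE x in M. (f x \<in> ball (z k) e) = (\<Phi> x \<in> V k)"
    by metis
  define g where "g y = z (LEAST k. y \<in> V k)" for y
  have "(\<lambda>y. LEAST k. y \<in> V k) \<in> measurable N (count_space UNIV)"
    by (rule measurable_Least) (use V(1) in auto)
  then have g: "g \<in> borel_measurable N"
    unfolding g_def by (rule measurable_compose) simp
  have "AE x in M. \<forall>k. (f x \<in> ball (z k) e) = (\<Phi> x \<in> V k)"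
    using V(2) by (simp add: AE_all_countable)
  then have "AE x in M. dist (g (\<Phi> x)) (f x) < e"
  proof eventually_elim
    case (elim x)
    obtain d where "d \<in> Z" "d \<in> ball (f x) e" using dense[of "ball (f x) e"] e by auto
    moreover obtain k where "z k = d" using z \<open>d \<in> Z\<close> unfolding z_def by (metis rangeE)
    ultimately have "\<Phi> x \<in> V k" using elim by (metis dist_commute mem_ball)
    then have "\<Phi> x \<in> V (LEAST k. \<Phi> x \<in> V k)" by (rule LeastI)
    then have "f x \<in> ball (g (\<Phi> x)) e" using elim unfolding g_def by blast
    then show ?case by (simp add: dist_commute)
  qed
  then show ?thesis using g by blast
qed

lemma ex_borel_limit_AE:
  fixes f :: "'a \<Rightarrow> 'z::{complete_space, second_countable_topology}"
  assumes s: "\<And>m. s m \<in> borel_measurable N"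
    and lim: "AE x in M. (\<lambda>m. s m (\<Phi> x)) \<longlonglongrightarrow> f x"
  shows "\<exists>g\<in>borel_measurable N. AE x in M. g (\<Phi> x) = f x"
proof -
  define g where "g y = lim (\<lambda>m. if Cauchy (\<lambda>m. s m y) then s m y else s 0 y)" for y
  have "g \<in> borel_measurable N"
  proof (rule borel_measurable_LIMSEQ_metric)
    fix y
    have "convergent (\<lambda>m. if Cauchy (\<lambda>m. s m y) then s m y else s 0 y)"
      by (cases "Cauchy (\<lambda>m. s m y)")
         (auto simp: convergent_eq_Cauchy[symmetric] convergent_def)
    then show "(\<lambda>m. if Cauchy (\<lambda>m. s m y) then s m y else s 0 y) \<longlonglongrightarrow> g y"
      unfolding g_def by (rule convergent_LIMSEQ_iff[THEN iffD1])
  qed (use s in measurable)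
  moreover have "AE x in M. g (\<Phi> x) = f x"
    using lim by eventually_elim (auto simp: g_def LIMSEQ_imp_Cauchy limI)
  ultimately show ?thesis by blast
qed

text \<open>An a.e. version of the Doob--Dynkin lemma.\<close>

lemma ex_borel_factorization_AE:
  fixes f :: "'a \<Rightarrow> 'z::{complete_space, second_countable_topology}"
  assumes \<Phi>: "\<Phi> \<in> measurable M N"
    and determined: "\<And>U. open U \<Longrightarrow> \<exists>V\<in>sets N. AE x in M. (f x \<in> U) = (\<Phi> x \<in> V)"
  shows "\<exists>g\<in>borel_measurable N. AE x in M. g (\<Phi> x) = f x"
proof -
  have "\<forall>m. \<exists>g. g \<in> borel_measurable N \<and> (AE x in M. dist (g (\<Phi> x)) (f x) < 1 / Suc m)"
    using ex_borel_approximation_AE[OF \<Phi> _ determined] by (simp add: Bex_def)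
  then obtain s where s: "\<And>m. s m \<in> borel_measurable N"
    and close: "\<And>m. AE x in M. dist (s m (\<Phi> x)) (f x) < 1 / Suc m"
    by (metis (no_types))
  have "AE x in M. \<forall>m. dist (s m (\<Phi> x)) (f x) < 1 / Suc m"
    using close by (simp only: AE_all_countable) blast
  then have "AE x in M. (\<lambda>m. s m (\<Phi> x)) \<longlonglongrightarrow> f x"
  proof eventually_elim
    case (elim x)
    then have "\<And>m. dist (s m (\<Phi> x)) (f x) \<le> 1 / Suc m" using less_imp_le by blast
    then have "(\<lambda>m. dist (s m (\<Phi> x)) (f x)) \<longlonglongrightarrow> 0"
      by (intro tendsto_sandwich[OF always_eventually always_eventually tendsto_const
            LIMSEQ_Suc[OF lim_inverse_n']]) simp_all
    then show ?case by (rule tendsto_dist_iff[THEN iffD2])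
  qed
  then show ?thesis by (rule ex_borel_limit_AE[OF s])
qed

lemma realizes_factor_AE:
  fixes \<pi> :: "'a \<Rightarrow> 'z::{complete_space, second_countable_topology}"
  assumes M: "finite_measure M" and S: "S \<subseteq> sets M"
    and \<Phi>: "\<Phi> \<in> measurable M N" "realizes M N \<Phi> S"
    and \<pi>: "\<pi> \<in> measurable M P" "realizes M P \<pi> S" and P: "sets P = sets borel"
  shows "\<exists>\<Psi>\<in>measurable N P. AE x in M. \<Psi> (\<Phi> x) = \<pi> x"
proof -
  have R\<Phi>: "\<forall>D\<in>S. \<exists>V\<in>sets N. AE x in M. (\<Phi> x \<in> V) = (x \<in> D)"
    using realizes_iff_AE[OF M \<Phi>(1) S] \<Phi>(2) by auto
  have R\<pi>: "\<forall>U\<in>sets P. \<exists>D\<in>S. AE x in M. (\<pi> x \<in> U) = (x \<in> D)"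
    using realizes_iff_AE[OF M \<pi>(1) S] \<pi>(2) by auto
  have "\<exists>\<Psi>\<in>borel_measurable N. AE x in M. \<Psi> (\<Phi> x) = \<pi> x"
  proof (rule ex_borel_factorization_AE[OF \<Phi>(1)])
    fix U :: "'z set" assume "open U"
    then obtain D where D: "D \<in> S" "AE x in M. (\<pi> x \<in> U) = (x \<in> D)"
      using R\<pi> P \<open>open U\<close> by (metis borel_open)
    then obtain V where V: "V \<in> sets N" "AE x in M. (\<Phi> x \<in> V) = (x \<in> D)"
      using R\<Phi> by blast
    have "AE x in M. (\<pi> x \<in> U) = (\<Phi> x \<in> V)" using D(2) V(2) by eventually_elim simp
    then show "\<exists>V\<in>sets N. AE x in M. (\<pi> x \<in> U) = (\<Phi> x \<in> V)" using V(1) by blast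
  qed
  then show ?thesis unfolding measurable_cong_sets[OF refl P] .
qed

lemma AE_inverse_of_mp_map:
  fixes \<Phi> :: "'a \<Rightarrow> 'y::{second_countable_topology, t2_space}"
  assumes \<Phi>: "mp_map M N \<Phi>" and N: "sets N = sets borel"
    and \<Psi>: "\<Psi> \<in> measurable N P" and \<Psi>': "\<Psi>' \<in> measurable P N"
    and inverse: "AE x in M. \<Psi>' (\<Psi> (\<Phi> x)) = \<Phi> x"
  shows "AE y in N. \<Psi>' (\<Psi> y) = y"
proof (rule AE_of_mp_map[OF \<Phi> inverse])
  have "(\<lambda>y. \<Psi>' (\<Psi> y)) \<in> measurable N N" "(\<lambda>y. y) \<in> measurable N N"
    using measurable_comp[OF \<Psi> \<Psi>'] by (simp_all add: comp_def)
  then show "{y \<in> space N. \<Psi>' (\<Psi> y) = y} \<in> sets N"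
    unfolding measurable_cong_sets[OF refl N] by (rule measurable_equality_set)
qed

lemma realizations_isomorphic:
  fixes \<Phi> :: "'a \<Rightarrow> 'y::{complete_space, second_countable_topology}"
    and \<pi> :: "'a \<Rightarrow> 'z::{complete_space, second_countable_topology}"
  assumes M: "finite_measure M" and S: "S \<subseteq> sets M"
    and \<Phi>: "mp_map M N \<Phi>" "realizes M N \<Phi> S" "sets N = sets borel"
    and \<pi>: "mp_map M P \<pi>" "realizes M P \<pi> S" "sets P = sets borel"
  obtains \<Psi> \<Psi>' where "mp_map N P \<Psi>" "mp_map P N \<Psi>'"
    "AE y in N. \<Psi>' (\<Psi> y) = y" "AE z in P. \<Psi> (\<Psi>' z) = z" "AE x in M. \<Psi> (\<Phi> x) = \<pi> x"
proof -
  have \<Phi>m: "\<Phi> \<in> measurable M N" and \<pi>m: "\<pi> \<in> measurable M P"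
    using \<Phi>(1) \<pi>(1) unfolding mp_map_def by auto
  obtain \<Psi> where \<Psi>: "\<Psi> \<in> measurable N P" "AE x in M. \<Psi> (\<Phi> x) = \<pi> x"
    using realizes_factor_AE[OF M S \<Phi>m \<Phi>(2) \<pi>m \<pi>(2,3)] by blast
  obtain \<Psi>' where \<Psi>': "\<Psi>' \<in> measurable P N" "AE x in M. \<Psi>' (\<pi> x) = \<Phi> x"
    using realizes_factor_AE[OF M S \<pi>m \<pi>(2) \<Phi>m \<Phi>(2,3)] by blast
  have "AE x in M. \<Psi>' (\<Psi> (\<Phi> x)) = \<Phi> x" "AE x in M. \<Psi> (\<Psi>' (\<pi> x)) = \<pi> x"
    using \<Psi>(2) \<Psi>'(2) by (eventually_elim, simp)+
  then show thesis
    using that mp_map_of_AE_comp[OF \<Phi>(1) \<pi>(1) \<Psi>] mp_map_of_AE_comp[OF \<pi>(1) \<Phi>(1) \<Psi>']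
      AE_inverse_of_mp_map[OF \<Phi>(1,3) \<Psi>(1) \<Psi>'(1)] AE_inverse_of_mp_map[OF \<pi>(1,3) \<Psi>'(1) \<Psi>(1)]
      \<Psi>(2) \<Psi>'(2)
    by blast
qed

lemma factor_map_of_AE_comp:
  fixes \<Psi> :: "'y \<Rightarrow> 'z::{second_countable_topology, t2_space}"
  assumes \<Phi>: "factor_map M A N C \<Phi>" and \<pi>: "factor_map M A P E \<pi>"
    and A: "\<And>g. mp_map M M (A g)" and C: "\<And>g. C g \<in> measurable N N"
    and E: "\<And>g. E g \<in> measurable P P" and P: "sets P = sets borel"
    and \<Psi>: "mp_map N P \<Psi>" and comp: "AE x in M. \<Psi> (\<Phi> x) = \<pi> x"
  shows "factor_map N C P E \<Psi>"
proof -
  have \<Psi>m: "\<Psi> \<in> measurable N P" using \<Psi> unfolding mp_map_def by blast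
  have "AE y in N. \<Psi> (C g y) = E g (\<Psi> y)" for g
  proof (rule AE_of_mp_map)
    show "mp_map M N \<Phi>" using \<Phi> unfolding factor_map_def by blast
    have "AE x in M. \<Phi> (A g x) = C g (\<Phi> x)" "AE x in M. \<pi> (A g x) = E g (\<pi> x)"
      using \<Phi> \<pi> unfolding factor_map_def by blast+
    moreover have "AE x in M. \<Psi> (\<Phi> (A g x)) = \<pi> (A g x)" by (rule mp_map_AE[OF A comp])
    ultimately show "AE x in M. \<Psi> (C g (\<Phi> x)) = E g (\<Psi> (\<Phi> x))"
      using comp by eventually_elim simp
    have "(\<lambda>y. \<Psi> (C g y)) \<in> measurable N P" "(\<lambda>y. E g (\<Psi> y)) \<in> measurable N P"
      using measurable_comp[OF C \<Psi>m] measurable_comp[OF \<Psi>m E] by (simp_all add: comp_def)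
    then show "{y \<in> space N. \<Psi> (C g y) = E g (\<Psi> y)} \<in> sets N"
      unfolding measurable_cong_sets[OF refl P] by (rule measurable_equality_set)
  qed
  then show ?thesis using \<Psi> unfolding factor_map_def by blast
qed

section \<open>Invariant sets\<close>

lemma inv_sets_iff_AE:
  assumes M: "finite_measure M" and A: "\<And>g. A g \<in> measurable M M"
  shows "D \<in> inv_sets M A \<longleftrightarrow> D \<in> sets M \<and> (\<forall>g. AE x in M. (A g x \<in> D) = (x \<in> D))"
proof -
  have "measure M (sdiff (A g -` D \<inter> space M) D) = 0 \<longleftrightarrow> (AE x in M. (A g x \<in> D) = (x \<in> D))"
    if D: "D \<in> sets M" for g
  proof -
    have "A g -` D \<inter> space M \<in> sets M" using measurable_sets[OF A D] .
    then have "measure M (sdiff (A g -` D \<inter> space M) D) = 0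
        \<longleftrightarrow> (AE x in M. (x \<in> A g -` D \<inter> space M) = (x \<in> D))"
      using null_sdiff_iff_AE[OF M _ D] by blast
    also have "\<dots> \<longleftrightarrow> (AE x in M. (A g x \<in> D) = (x \<in> D))"
      by (rule AE_cong) auto
    finally show ?thesis .
  qed
  then show ?thesis unfolding inv_sets_def invariant_set_def by auto
qed

definition invariant_algebra :: "'x measure \<Rightarrow> ('i \<Rightarrow> 'x \<Rightarrow> 'x) \<Rightarrow> 'x measure" where
  "invariant_algebra M A = sigma (space M) (inv_sets M A)"

locale pmp_action_space = prob_space M for M :: "'x measure" +
  fixes A :: "'g::group_add \<Rightarrow> 'x \<Rightarrow> 'x"
  assumes pmp_action: "pmp_action M A"
begin

lemma mp_map_act: "mp_map M M (A g)"
  using pmp_action unfolding pmp_action_def by blast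

lemma measurable_act [measurable]: "A g \<in> measurable M M"
  using mp_map_act unfolding mp_map_def by blast

lemma inv_sets_iff: "D \<in> inv_sets M A \<longleftrightarrow> D \<in> sets M \<and> (\<forall>g. AE x in M. (A g x \<in> D) = (x \<in> D))"
  by (rule inv_sets_iff_AE[OF finite_measure_axioms measurable_act])

lemma inv_sets_subset: "inv_sets M A \<subseteq> sets M"
  using inv_sets_iff by auto

lemma sigma_algebra_inv_sets: "sigma_algebra (space M) (inv_sets M A)"
proof -
  have compl: "space M - D \<in> inv_sets M A" if D: "D \<in> inv_sets M A" for D
  proof -
    have "AE x in M. (A g x \<in> space M - D) = (x \<in> space M - D)" for g
    proof -
      have "AE x in M. (A g x \<in> D) = (x \<in> D)" using D inv_sets_iff by blast
      then show ?thesis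
        using AE_space by eventually_elim (use measurable_space[OF measurable_act] in auto)
    qed
    moreover have "space M - D \<in> sets M" using D inv_sets_iff by blast
    ultimately show ?thesis using inv_sets_iff by blast
  qed
  have union: "(\<Union>i. D i) \<in> inv_sets M A" if D: "range D \<subseteq> inv_sets M A" for D :: "nat \<Rightarrow> 'x set"
  proof -
    have "AE x in M. (A g x \<in> (\<Union>i. D i)) = (x \<in> (\<Union>i. D i))" for g
    proof -
      have "\<And>i. AE x in M. (A g x \<in> D i) = (x \<in> D i)" using D inv_sets_iff by blast
      then have "AE x in M. \<forall>i. (A g x \<in> D i) = (x \<in> D i)" by (simp add: AE_all_countable)
      then show ?thesis by eventually_elim auto
    qed
    moreover have "(\<Union>i. D i) \<in> sets M" using D inv_sets_subset by blast
    ultimately show ?thesis using inv_sets_iff by blast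
  qed
  have "{} \<in> inv_sets M A" using inv_sets_iff by simp
  then show ?thesis
    using compl union inv_sets_subset sets.sets_into_space unfolding sigma_algebra_iff2 by blast
qed

lemma sets_invariant_algebra: "sets (invariant_algebra M A) = inv_sets M A"
  unfolding invariant_algebra_def
  using sigma_algebra.sets_measure_of_eq[OF sigma_algebra_inv_sets] by simp

lemma space_invariant_algebra: "space (invariant_algebra M A) = space M"
  unfolding invariant_algebra_def by (simp add: space_measure_of_conv)

lemma subalgebra_invariant_algebra: "subalgebra M (invariant_algebra M A)"
  unfolding subalgebra_def
  using sets_invariant_algebra space_invariant_algebra inv_sets_subset by auto

lemma vimage_inv_sets_of_AE_invariant:
  assumes f: "f \<in> borel_measurable M" and inv: "\<And>g. AE x in M. f (A g x) = f x"
    and U: "U \<in> sets borel"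
  shows "f -` U \<inter> space M \<in> inv_sets M A"
proof -
  have "AE x in M. (A g x \<in> f -` U \<inter> space M) = (x \<in> f -` U \<inter> space M)" for g
    using inv[of g] AE_space by eventually_elim (use measurable_space[OF measurable_act] in auto)
  then show ?thesis using measurable_sets[OF f U] unfolding inv_sets_iff by blast
qed

lemma AE_invariant_of_realizes:
  fixes \<pi> :: "'x \<Rightarrow> 'e::{second_countable_topology, t2_space}"
  assumes \<pi>: "\<pi> \<in> measurable M E" and E: "sets E = sets borel"
    and realizes: "realizes M E \<pi> (inv_sets M A)"
  shows "AE x in M. \<pi> (A g x) = \<pi> x"
proof -
  obtain Bs :: "'e set set" where Bs: "countable Bs" "topological_basis Bs"
    using ex_countable_basis by blast
  have R: "\<forall>U\<in>sets E. \<exists>D\<in>inv_sets M A. AE x in M. (\<pi> x \<in> U) = (x \<in> D)"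
    using realizes_iff_AE[OF finite_measure_axioms \<pi> inv_sets_subset] realizes by blast
  have "AE x in M. (\<pi> (A g x) \<in> U) = (\<pi> x \<in> U)" if U: "U \<in> Bs" for U
  proof -
    have "U \<in> sets E" using topological_basis_open[OF Bs(2) U] E by simp
    then obtain D where D: "D \<in> inv_sets M A" "AE x in M. (\<pi> x \<in> U) = (x \<in> D)"
      using R by blast
    have "AE x in M. (A g x \<in> D) = (x \<in> D)" using D(1) inv_sets_iff by blast
    moreover have "AE x in M. (\<pi> (A g x) \<in> U) = (A g x \<in> D)" by (rule mp_map_AE[OF mp_map_act D(2)])
    ultimately show ?thesis using D(2) by eventually_elim simp
  qed
  then have "AE x in M. \<forall>U\<in>Bs. (\<pi> (A g x) \<in> U) = (\<pi> x \<in> U)"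
    using Bs(1) by (subst AE_ball_countable) auto
  then show ?thesis
  proof eventually_elim
    case (elim x)
    show ?case
    proof (rule ccontr)
      assume "\<pi> (A g x) \<noteq> \<pi> x"
      then obtain U where "open U" "\<pi> (A g x) \<in> U" "\<pi> x \<notin> U" using t1_space by blast
      then obtain V where "V \<in> Bs" "\<pi> (A g x) \<in> V" "V \<subseteq> U"
        using topological_basisE[OF Bs(2)] by metis
      then show False using elim \<open>\<pi> x \<notin> U\<close> by blast
    qed
  qed
qed

end

section \<open>Invariance of conditional expectations and a zero--one law\<close>

lemma (in finite_measure_subalgebra) AE_real_cond_exp_invariant:
  assumes T: "T \<in> measurable M M" "distr M M T = M"
    and TF: "T \<in> measurable F F"
    and onto: "\<And>Q. Q \<in> sets F \<Longrightarrow> \<exists>Q'\<in>sets F. AE x in M. (x \<in> Q) = (T x \<in> Q')"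
    and f: "integrable M f" and f_inv: "AE x in M. f (T x) = f x"
  shows "AE x in M. real_cond_exp M F f (T x) = real_cond_exp M F f x"
proof -
  let ?\<phi> = "real_cond_exp M F f"
  have [measurable]: "T \<in> measurable M M" "f \<in> borel_measurable M" "?\<phi> \<in> borel_measurable M"
    using T(1) f by (auto intro: borel_measurable_cond_exp2)
  have \<phi>F: "?\<phi> \<in> borel_measurable F" by (rule borel_measurable_cond_exp)
  have FM: "sets F \<subseteq> sets M" using subalg unfolding subalgebra_def by auto
  have "AE x in M. ?\<phi> x = ?\<phi> (T x)"
  proof (rule real_cond_exp_charact)
    show "integrable M (\<lambda>x. ?\<phi> (T x))"
      using integrable_distr_eq[of T M M ?\<phi>] real_cond_exp_int(1)[OF f] T by simp
    show "(\<lambda>x. ?\<phi> (T x)) \<in> borel_measurable F"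
      using measurable_comp[OF TF \<phi>F] by (simp add: comp_def)
  next
    fix Q assume Q: "Q \<in> sets F"
    obtain Q' where Q': "Q' \<in> sets F" "AE x in M. (x \<in> Q) = (T x \<in> Q')"
      using onto[OF Q] by blast
    have [measurable]: "Q \<in> sets M" "Q' \<in> sets M" using Q Q'(1) FM by auto
    have "(\<integral>x\<in>Q. ?\<phi> (T x) \<partial>M) = (\<integral>x. indicator Q' (T x) * ?\<phi> (T x) \<partial>M)"
      unfolding set_lebesgue_integral_def
      by (rule integral_cong_AE) (use Q'(2) in \<open>auto elim!: eventually_mono simp: indicator_def\<close>)
    also have "\<dots> = (\<integral>y. indicator Q' y * ?\<phi> y \<partial>distr M M T)"
      by (rule integral_distr[symmetric]) auto
    also have "\<dots> = (\<integral>y. indicator Q' y * f y \<partial>M)"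
      unfolding T(2)
      by (rule real_cond_exp_intg(2))
         (use integrable_mult_indicator[OF _ f] Q'(1) in \<open>auto intro: measurable_from_subalg[OF subalg] simp: borel_measurable_indicator\<close>)
    also have "\<dots> = (\<integral>y. indicator Q' y * f y \<partial>distr M M T)" unfolding T(2) ..
    also have "\<dots> = (\<integral>x. indicator Q' (T x) * f (T x) \<partial>M)"
      by (rule integral_distr) auto
    also have "\<dots> = (\<integral>x\<in>Q. f x \<partial>M)"
      unfolding set_lebesgue_integral_def
      by (rule integral_cong_AE) (use Q'(2) f_inv in \<open>auto elim!: eventually_elim2 simp: indicator_def\<close>)
    finally show "(\<integral>x\<in>Q. f x \<partial>M) = (\<integral>x\<in>Q. ?\<phi> (T x) \<partial>M)" by simp
  qed (use f in auto)
  then show ?thesis by (auto elim!: eventually_mono)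
qed

lemma (in prob_space) AE_eq_expectation_of_zero_one:
  fixes \<phi> :: "'a \<Rightarrow> real"
  assumes \<phi>: "integrable M \<phi>"
    and zero_one: "\<And>U. U \<in> sets borel \<Longrightarrow> prob (\<phi> -` U \<inter> space M) = 0 \<or> prob (\<phi> -` U \<inter> space M) = 1"
  shows "AE x in M. \<phi> x = expectation \<phi>"
proof -
  let ?c = "expectation \<phi>"
  have [measurable]: "\<phi> \<in> borel_measurable M" using \<phi> by auto
  have above: "AE x in M. \<phi> x \<le> q" if q: "q > ?c" for q
  proof -
    let ?T = "\<phi> -` {q<..} \<inter> space M"
    have T: "?T \<in> events" by measurable
    have "prob ?T \<noteq> 1"
    proof
      assume "prob ?T = 1"
      then have "AE x in M. q \<le> \<phi> x" using prob_eq_1[OF T] by (auto elim!: eventually_mono)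
      then have "expectation (\<lambda>_. q) \<le> ?c" by (intro integral_mono_AE \<phi>) auto
      then show False using q prob_space by simp
    qed
    then have "?T \<in> null_sets M"
      using zero_one[of "{q<..}"] T by (auto simp: emeasure_eq_measure null_sets_def)
    then have "AE x in M. x \<notin> ?T" by (rule AE_not_in)
    then show ?thesis using AE_space by eventually_elim auto
  qed
  have "AE x in M. \<forall>q\<in>\<rat>. q > ?c \<longrightarrow> \<phi> x \<le> q"
    using above by (subst AE_ball_countable) (auto intro: countable_rat)
  then have le: "AE x in M. \<phi> x \<le> ?c"
  proof eventually_elim
    case (elim x)
    show ?case
    proof (rule ccontr)
      assume "\<not> \<phi> x \<le> ?c"
      then obtain r where "r \<in> \<rat>" "?c < r" "r < \<phi> x" using Rats_dense_in_real[of ?c "\<phi> x"] by auto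
      then show False using elim by force
    qed
  qed
  have "(\<integral>x. ?c - \<phi> x \<partial>M) = 0" using \<phi> prob_space by simp
  then have "AE x in M. ?c - \<phi> x = 0"
    using integral_nonneg_eq_0_iff_AE[of M "\<lambda>x. ?c - \<phi> x"] \<phi> le by (auto elim!: eventually_mono)
  then show ?thesis by (auto elim!: eventually_mono)
qed

locale pmp_pair_space = prob_space M for M :: "'x measure" +
  fixes A :: "'g::group_add \<Rightarrow> 'x \<Rightarrow> 'x" and B :: "'h::group_add \<Rightarrow> 'x \<Rightarrow> 'x"
  assumes pmp_pair_action: "pmp_pair_action M A B"
begin

sublocale A: pmp_action_space M A
  using pmp_pair_action unfolding pmp_pair_action_def by unfold_locales blast

sublocale B: pmp_action_space M B
  using pmp_pair_action unfolding pmp_pair_action_def by unfold_locales blast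

lemma AE_commute: "AE x in M. A g (B h x) = B h (A g x)"
  using pmp_pair_action unfolding pmp_pair_action_def commuting_def by blast

lemma vimage_inv_sets_commuting:
  assumes T: "T \<in> inv_sets M A"
  shows "B h -` T \<inter> space M \<in> inv_sets M A"
proof -
  have "AE x in M. (A g x \<in> B h -` T \<inter> space M) = (x \<in> B h -` T \<inter> space M)" for g
  proof -
    have "AE x in M. (A g x \<in> T) = (x \<in> T)" using T A.inv_sets_iff by blast
    then have "AE x in M. (A g (B h x) \<in> T) = (B h x \<in> T)" by (rule mp_map_AE[OF B.mp_map_act])
    then show ?thesis using AE_commute[of g h] AE_space
      by eventually_elim (use measurable_space[OF A.measurable_act] in auto)
  qed
  moreover have "B h -` T \<inter> space M \<in> sets M"
    using T A.inv_sets_subset by (intro measurable_sets[OF B.measurable_act]) auto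
  ultimately show ?thesis using A.inv_sets_iff by blast
qed

lemma measurable_invariant_algebra_commuting:
  "B h \<in> measurable (invariant_algebra M A) (invariant_algebra M A)"
  by (rule measurableI)
     (use vimage_inv_sets_commuting measurable_space[OF B.measurable_act] in
       \<open>auto simp: A.sets_invariant_algebra A.space_invariant_algebra\<close>)

lemma inv_sets_pair_act:
  assumes DA: "D \<in> inv_sets M A" and DB: "D \<in> inv_sets M B"
  shows "D \<in> inv_sets M (pair_act A B)"
proof -
  have meas: "pair_act A B gh \<in> measurable M M" for gh
    unfolding pair_act_def
    by (cases gh) (simp add: measurable_compose[OF B.measurable_act A.measurable_act])
  have "AE x in M. (pair_act A B (g, h) x \<in> D) = (x \<in> D)" for g h
  proof -
    have "AE x in M. (A g x \<in> D) = (x \<in> D)" "AE x in M. (B h x \<in> D) = (x \<in> D)"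
      using DA DB A.inv_sets_iff B.inv_sets_iff by blast+
    then have "AE x in M. (A g (B h x) \<in> D) = (B h x \<in> D)" "AE x in M. (B h x \<in> D) = (x \<in> D)"
      using mp_map_AE[OF B.mp_map_act] by blast+
    then show ?thesis by eventually_elim (simp add: pair_act_def)
  qed
  then show ?thesis
    using DA A.inv_sets_subset unfolding inv_sets_iff_AE[OF finite_measure_axioms meas]
    by (metis subsetD surj_pair)
qed

lemma AE_cond_exp_invariant_algebra_eq_measure:
  assumes erg: "ergodic M (pair_act A B)" and S: "S \<in> inv_sets M B"
  shows "AE x in M. real_cond_exp M (invariant_algebra M A) (indicator S) x = measure M S"
proof -
  let ?F = "invariant_algebra M A"
  let ?\<phi> = "real_cond_exp M ?F (indicator S)"
  interpret F: finite_measure_subalgebra M ?F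
    by unfold_locales (rule A.subalgebra_invariant_algebra)
  have [measurable]: "S \<in> sets M" using S B.inv_sets_subset by blast
  have int: "integrable M (indicator S :: 'x \<Rightarrow> real)"
    by (intro integrable_real_indicator) (simp_all add: emeasure_eq_measure)
  have F_sets: "sets ?F = inv_sets M A" by (rule A.sets_invariant_algebra)
  have \<phi>F: "?\<phi> \<in> borel_measurable ?F" by (rule borel_measurable_cond_exp)
  have [measurable]: "?\<phi> \<in> borel_measurable M" by (rule borel_measurable_cond_exp2)
  have B_inv: "AE x in M. ?\<phi> (B h x) = ?\<phi> x" for h
  proof (rule F.AE_real_cond_exp_invariant[OF B.measurable_act _ _ _ int])
    show "distr M M (B h) = M" using B.mp_map_act unfolding mp_map_def by blast
    show "B h \<in> measurable ?F ?F" by (rule measurable_invariant_algebra_commuting)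
    show "\<exists>Q'\<in>sets ?F. AE x in M. (x \<in> Q) = (B h x \<in> Q')" if Q: "Q \<in> sets ?F" for Q
    proof
      show "B (- h) -` Q \<inter> space M \<in> sets ?F"
        using measurable_sets[OF measurable_invariant_algebra_commuting Q] A.space_invariant_algebra
        by simp
      have "AE x in M. B (- h + h) x = B (- h) (B h x)" "AE x in M. B 0 x = x"
        using B.pmp_action unfolding pmp_action_def by blast+
      then show "AE x in M. (x \<in> Q) = (B h x \<in> B (- h) -` Q \<inter> space M)"
        using AE_space by eventually_elim (use measurable_space[OF B.measurable_act] in auto)
    qed
    have "AE x in M. (B h x \<in> S) = (x \<in> S)" using S B.inv_sets_iff by blast
    then show "AE x in M. indicator S (B h x) = (indicator S x :: real)"
      by eventually_elim (simp add: indicator_def)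
  qed
  have "prob (?\<phi> -` U \<inter> space M) = 0 \<or> prob (?\<phi> -` U \<inter> space M) = 1"
    if U: "U \<in> sets borel" for U
  proof -
    have "?\<phi> -` U \<inter> space M \<in> inv_sets M A"
      using measurable_sets[OF \<phi>F U] F_sets A.space_invariant_algebra by simp
    moreover have "?\<phi> -` U \<inter> space M \<in> inv_sets M B"
      using B.vimage_inv_sets_of_AE_invariant[OF _ B_inv U] by simp
    ultimately show ?thesis using erg inv_sets_pair_act unfolding ergodic_def by blast
  qed
  then have "AE x in M. ?\<phi> x = expectation ?\<phi>"
    by (intro AE_eq_expectation_of_zero_one F.real_cond_exp_int(1)[OF int])
  moreover have "expectation ?\<phi> = measure M S"
    using F.real_cond_exp_int(2)[OF int] by simp
  ultimately show ?thesis by simp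
qed

lemma inv_sets_indep:
  assumes erg: "ergodic M (pair_act A B)" and S: "S \<in> inv_sets M B" and T: "T \<in> inv_sets M A"
  shows "measure M (S \<inter> T) = measure M S * measure M T"
proof -
  interpret F: finite_measure_subalgebra M "invariant_algebra M A"
    by unfold_locales (rule A.subalgebra_invariant_algebra)
  have [measurable]: "S \<in> sets M" "T \<in> sets M"
    using S T A.inv_sets_subset B.inv_sets_subset by auto
  have int: "integrable M (indicator S :: 'x \<Rightarrow> real)"
    by (intro integrable_real_indicator) (simp_all add: emeasure_eq_measure)
  have "measure M (S \<inter> T) = (\<integral>x\<in>T. indicator S x \<partial>M)"
    unfolding set_lebesgue_integral_def
    by (simp add: indicator_inter_arith[symmetric] Int_commute Int_absorb2 sets.sets_into_space)
  also have "\<dots> = (\<integral>x\<in>T. real_cond_exp M (invariant_algebra M A) (indicator S) x \<partial>M)"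
    using T A.sets_invariant_algebra by (intro F.real_cond_exp_intA int) simp
  also have "\<dots> = (\<integral>x\<in>T. measure M S \<partial>M)"
    unfolding set_lebesgue_integral_def
    using AE_cond_exp_invariant_algebra_eq_measure[OF erg S]
    by (intro integral_cong_AE) (auto elim!: eventually_mono)
  also have "\<dots> = measure M S * measure M T"
    unfolding set_lebesgue_integral_def using sets.sets_into_space[of T M]
    by (simp add: Int_absorb2 mult.commute)
  finally show ?thesis .
qed

end

section \<open>The joint ergodic decomposition map\<close>

lemma sets_pair_measure_borel:
  assumes "sets Y = sets (borel :: 'y::second_countable_topology measure)"
    and "sets Z = sets (borel :: 'z::second_countable_topology measure)"
  shows "sets (Y \<Otimes>\<^sub>M Z) = sets (borel :: ('y \<times> 'z) measure)"
  using sets_pair_measure_cong[OF assms] by (metis borel_prod)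

lemma measurable_local_prod_G:
  "C g \<in> measurable Y Y \<Longrightarrow> local_prod_G C g \<in> measurable (Y \<Otimes>\<^sub>M Z) (Y \<Otimes>\<^sub>M Z)"
  unfolding local_prod_G_def by (simp add: split_beta')

lemma measurable_local_prod_H:
  "D h \<in> measurable Z Z \<Longrightarrow> local_prod_H D h \<in> measurable (Y \<Otimes>\<^sub>M Z) (Y \<Otimes>\<^sub>M Z)"
  unfolding local_prod_H_def by (simp add: split_beta')

context pmp_pair_space
begin

lemma mp_map_ergodic_decompositions:
  assumes erg: "ergodic M (pair_act A B)"
    and \<pi>B: "mp_map M EB \<pi>B" "realizes M EB \<pi>B (inv_sets M B)" "prob_space EB"
    and \<pi>A: "mp_map M EA \<pi>A" "realizes M EA \<pi>A (inv_sets M A)" "prob_space EA"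
  shows "mp_map M (EB \<Otimes>\<^sub>M EA) (\<lambda>x. (\<pi>B x, \<pi>A x))"
proof -
  have \<pi>Bm: "\<pi>B \<in> measurable M EB" and \<pi>Am: "\<pi>A \<in> measurable M EA"
    using \<pi>A(1) \<pi>B(1) unfolding mp_map_def by auto
  have \<pi>: "(\<lambda>x. (\<pi>B x, \<pi>A x)) \<in> measurable M (EB \<Otimes>\<^sub>M EA)" using \<pi>Bm \<pi>Am by measurable
  have RB: "\<forall>V\<in>sets EB. \<exists>D\<in>inv_sets M B. AE x in M. (\<pi>B x \<in> V) = (x \<in> D)"
    using realizes_iff_AE[OF finite_measure_axioms \<pi>Bm B.inv_sets_subset] \<pi>B(2) by auto
  have RA: "\<forall>V\<in>sets EA. \<exists>D\<in>inv_sets M A. AE x in M. (\<pi>A x \<in> V) = (x \<in> D)"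
    using realizes_iff_AE[OF finite_measure_axioms \<pi>Am A.inv_sets_subset] \<pi>A(2) by auto
  have "EB \<Otimes>\<^sub>M EA = distr M (EB \<Otimes>\<^sub>M EA) (\<lambda>x. (\<pi>B x, \<pi>A x))"
  proof (rule pair_measure_eqI)
    show "sigma_finite_measure EB" "sigma_finite_measure EA"
      using \<pi>A(3) \<pi>B(3) by (simp_all add: prob_space_imp_sigma_finite)
    fix a b assume a: "a \<in> sets EB" and b: "b \<in> sets EA"
    obtain S where S: "S \<in> inv_sets M B" "AE x in M. (\<pi>B x \<in> a) = (x \<in> S)" using RB a by blast
    obtain T where T: "T \<in> inv_sets M A" "AE x in M. (\<pi>A x \<in> b) = (x \<in> T)" using RA b by blast
    have [measurable]: "S \<in> sets M" "T \<in> sets M" "a \<in> sets EB" "b \<in> sets EA"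
      using S T a b A.inv_sets_subset B.inv_sets_subset by auto
    have "emeasure (distr M (EB \<Otimes>\<^sub>M EA) (\<lambda>x. (\<pi>B x, \<pi>A x))) (a \<times> b)
        = emeasure M ((\<lambda>x. (\<pi>B x, \<pi>A x)) -` (a \<times> b) \<inter> space M)"
      using \<pi> by (simp add: emeasure_distr)
    also have "\<dots> = emeasure M (S \<inter> T)"
      by (rule emeasure_eq_AE) (use S(2) T(2) \<pi>Am \<pi>Bm in auto)
    also have "\<dots> = emeasure M S * emeasure M T"
      using inv_sets_indep[OF erg S(1) T(1)] by (simp add: emeasure_eq_measure ennreal_mult)
    also have "emeasure M S = emeasure M (\<pi>B -` a \<inter> space M)"
      by (rule emeasure_eq_AE) (use S(2) measurable_sets[OF \<pi>Bm a] in auto)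
    also have "emeasure M T = emeasure M (\<pi>A -` b \<inter> space M)"
      by (rule emeasure_eq_AE) (use T(2) measurable_sets[OF \<pi>Am b] in auto)
    also have "emeasure M (\<pi>B -` a \<inter> space M) = emeasure EB a"
      using \<pi>B(1) emeasure_distr[OF \<pi>Bm a] unfolding mp_map_def by simp
    also have "emeasure M (\<pi>A -` b \<inter> space M) = emeasure EA b"
      using \<pi>A(1) emeasure_distr[OF \<pi>Am b] unfolding mp_map_def by simp
    finally show "emeasure EB a * emeasure EA b
        = emeasure (distr M (EB \<Otimes>\<^sub>M EA) (\<lambda>x. (\<pi>B x, \<pi>A x))) (a \<times> b)" by simp
  qed simp
  then show ?thesis using \<pi> unfolding mp_map_def by simp
qed

lemma factor_map_local_prod_G:
  fixes \<pi>A :: "'x \<Rightarrow> 'e::{second_countable_topology, t2_space}"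
  assumes \<pi>: "mp_map M (EB \<Otimes>\<^sub>M EA) (\<lambda>x. (\<pi>B x, \<pi>A x))" and \<pi>B: "factor_map M A EB AB \<pi>B"
    and \<pi>A: "\<pi>A \<in> measurable M EA" "sets EA = sets borel" "realizes M EA \<pi>A (inv_sets M A)"
  shows "factor_map M A (EB \<Otimes>\<^sub>M EA) (local_prod_G AB) (\<lambda>x. (\<pi>B x, \<pi>A x))"
proof -
  have "AE x in M. (\<pi>B (A g x), \<pi>A (A g x)) = local_prod_G AB g (\<pi>B x, \<pi>A x)" for g
  proof -
    have "AE x in M. \<pi>B (A g x) = AB g (\<pi>B x)" using \<pi>B unfolding factor_map_def by blast
    moreover have "AE x in M. \<pi>A (A g x) = \<pi>A x" by (rule A.AE_invariant_of_realizes[OF \<pi>A])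
    ultimately show ?thesis by eventually_elim (simp add: local_prod_G_def)
  qed
  then show ?thesis using \<pi> unfolding factor_map_def by blast
qed

lemma factor_map_local_prod_H:
  fixes \<pi>B :: "'x \<Rightarrow> 'f::{second_countable_topology, t2_space}"
  assumes \<pi>: "mp_map M (EB \<Otimes>\<^sub>M EA) (\<lambda>x. (\<pi>B x, \<pi>A x))" and \<pi>A: "factor_map M B EA BA \<pi>A"
    and \<pi>B: "\<pi>B \<in> measurable M EB" "sets EB = sets borel" "realizes M EB \<pi>B (inv_sets M B)"
  shows "factor_map M B (EB \<Otimes>\<^sub>M EA) (local_prod_H BA) (\<lambda>x. (\<pi>B x, \<pi>A x))"
proof -
  have "AE x in M. (\<pi>B (B h x), \<pi>A (B h x)) = local_prod_H BA h (\<pi>B x, \<pi>A x)" for h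
  proof -
    have "AE x in M. \<pi>A (B h x) = BA h (\<pi>A x)" using \<pi>A unfolding factor_map_def by blast
    moreover have "AE x in M. \<pi>B (B h x) = \<pi>B x" by (rule B.AE_invariant_of_realizes[OF \<pi>B])
    ultimately show ?thesis by eventually_elim (simp add: local_prod_H_def)
  qed
  then show ?thesis using \<pi> unfolding factor_map_def by blast
qed

end

theorem mainTheorem1:
  fixes M :: "('x::polish_space) measure"
    and A :: "'g::{group_add, countable} \<Rightarrow> 'x \<Rightarrow> 'x"
    and B :: "'h::{group_add, countable} \<Rightarrow> 'x \<Rightarrow> 'x"
    and \<eta>A :: "('e::polish_space) measure" and \<pi>A :: "'x \<Rightarrow> 'e" and BA :: "'h \<Rightarrow> 'e \<Rightarrow> 'e"
    and \<eta>B :: "('f::polish_space) measure" and \<pi>B :: "'x \<Rightarrow> 'f" and AB :: "'g \<Rightarrow> 'f \<Rightarrow> 'f"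
    and N :: "('y::polish_space) measure" and \<Phi> :: "'x \<Rightarrow> 'y"
    and C :: "'g \<Rightarrow> 'y \<Rightarrow> 'y" and D :: "'h \<Rightarrow> 'y \<Rightarrow> 'y"
  assumes X: "standard_prob_space M"
    and act: "pmp_pair_action M A B"
    and erg: "ergodic M (pair_act A B)"
    \<comment> \<open>(\<pi>A, BA): ergodic decomposition of A, with the induced action E_{B~>A} of H\<close>
    and EA: "standard_prob_space \<eta>A" "pmp_action \<eta>A BA"
        "factor_map M B \<eta>A BA \<pi>A" "realizes M \<eta>A \<pi>A (inv_sets M A)"
    \<comment> \<open>(\<pi>B, AB): ergodic decomposition of B, with the induced action E_{A~>B} of G\<close>
    and EB: "standard_prob_space \<eta>B" "pmp_action \<eta>B AB"
        "factor_map M A \<eta>B AB \<pi>B" "realizes M \<eta>B \<pi>B (inv_sets M B)"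
    \<comment> \<open>(\<Phi>, (C,D)): synergodic decomposition of (A,B)\<close>
    and SY: "standard_prob_space N" "pmp_pair_action N C D"
        "factor_map M A N C \<Phi>" "factor_map M B N D \<Phi>"
        "realizes M N \<Phi> (sigma_sets (space M) (inv_sets M A \<union> inv_sets M B))"
  shows "\<exists>\<Psi> :: 'y \<Rightarrow> 'f \<times> 'e.
           action_iso N C (\<eta>B \<Otimes>\<^sub>M \<eta>A) (local_prod_G AB) \<Psi> \<and>
           action_iso N D (\<eta>B \<Otimes>\<^sub>M \<eta>A) (local_prod_H BA) \<Psi> \<and>
           (AE x in M. \<Psi> (\<Phi> x) = (\<pi>B x, \<pi>A x))"
proof -
  have M: "prob_space M"
    and \<eta>A: "prob_space \<eta>A" "sets \<eta>A = sets borel"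
    and \<eta>B: "prob_space \<eta>B" "sets \<eta>B = sets borel"
    and N: "prob_space N" "sets N = sets borel"
    using X EA(1) EB(1) SY(1) unfolding standard_prob_space_def by auto
  interpret pmp_pair_space M A B
    using M act by (simp add: pmp_pair_space_def pmp_pair_space_axioms_def)
  interpret N: pmp_pair_space N C D
    using N(1) SY(2) by (simp add: pmp_pair_space_def pmp_pair_space_axioms_def)
  let ?P = "\<eta>B \<Otimes>\<^sub>M \<eta>A" and ?\<pi> = "\<lambda>x. (\<pi>B x, \<pi>A x)"
  have P: "sets ?P = sets borel" by (rule sets_pair_measure_borel[OF \<eta>B(2) \<eta>A(2)])
  have \<pi>Am: "\<pi>A \<in> measurable M \<eta>A" and \<pi>Bm: "\<pi>B \<in> measurable M \<eta>B"
    using EA(3) EB(3) unfolding factor_map_def mp_map_def by auto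
  have \<pi>: "mp_map M ?P ?\<pi>"
    using mp_map_ergodic_decompositions[OF erg _ EB(4) \<eta>B(1) _ EA(4) \<eta>A(1)] EA(3) EB(3)
    unfolding factor_map_def by blast
  have \<Phi>: "mp_map M N \<Phi>" using SY(3) unfolding factor_map_def by blast
  have ABm: "\<And>g. AB g \<in> measurable \<eta>B \<eta>B" and BAm: "\<And>h. BA h \<in> measurable \<eta>A \<eta>A"
    using EA(2) EB(2) unfolding pmp_action_def mp_map_def by auto
  have S: "sigma_sets (space M) (inv_sets M A \<union> inv_sets M B) \<subseteq> sets M"
    using A.inv_sets_subset B.inv_sets_subset by (intro sets.sigma_sets_subset) auto
  have "realizes M ?P ?\<pi> (sigma_sets (space M) (inv_sets M A \<union> inv_sets M B))"
    by (rule realizes_pair[OF finite_measure_axioms \<pi>Bm B.inv_sets_subset EB(4) \<pi>Am A.inv_sets_subset EA(4)])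
  then obtain \<Psi> \<Psi>' where \<Psi>: "mp_map N ?P \<Psi>" "mp_map ?P N \<Psi>'"
    "AE y in N. \<Psi>' (\<Psi> y) = y" "AE z in ?P. \<Psi> (\<Psi>' z) = z" "AE x in M. \<Psi> (\<Phi> x) = ?\<pi> x"
    by (rule realizations_isomorphic[OF finite_measure_axioms S \<Phi> SY(5) N(2) \<pi> _ P])
  have "factor_map N C ?P (local_prod_G AB) \<Psi>"
    by (rule factor_map_of_AE_comp[OF SY(3) factor_map_local_prod_G[OF \<pi> EB(3) \<pi>Am \<eta>A(2) EA(4)]
          A.mp_map_act N.A.measurable_act measurable_local_prod_G[OF ABm] P \<Psi>(1,5)])
  moreover have "factor_map N D ?P (local_prod_H BA) \<Psi>"
    by (rule factor_map_of_AE_comp[OF SY(4) factor_map_local_prod_H[OF \<pi> EA(3) \<pi>Bm \<eta>B(2) EB(4)]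
          B.mp_map_act N.B.measurable_act measurable_local_prod_H[OF BAm] P \<Psi>(1,5)])
  ultimately show ?thesis unfolding action_iso_def using \<Psi> by blast
qed

end
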